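(* Consider the first-stage fixed composition strategy searching among $1/\alpha$ sections, where at each time exactly $K^\ast=q^\ast/\alpha$ sections are probed (i.e. $|\mathbf S'_n|\alpha=q^\ast$), and let $\rho'_n$ be the posterior over sections. Then for all $n\ge1$, $$\mathbb E\big[U(\rho'_{n+1})-U(\rho'_n)\,\big|\,\mathcal F_n,\mathbf S'_n\big]\ge C_{\mathrm{BAWGN}}(q^\ast,q^\ast B\sigma^2),\qquad U(\rho):=\sum_{i=1}^{1/\alpha}\rho(i)\log\frac{\rho(i)}{1-\rho(i)}.$$
   Context: Logarithms base 2. Fix $B>0$, $\sigma^2>0$, $\alpha\in(0,1)$ with $M:=1/\alpha$ an integer $\ge2$, and $q^\ast\in(0,1)$ with $K^\ast=q^\ast/\alpha$ an integer, $1\le K^\ast<M$. The search region of width $B$ is divided into $M$ sections of width $\alpha B$; the target lies in exactly one section, uniformly at random. At each time $n$ the agent chooses, uniformly at random among all subsets of size $K^\ast$ and independently of the past, a set of sections $A^1_n$ to probe, and observes $Y_n=X_n+Z_n$ where $X_n=1$ if the target's section lies in $A^1_n$ and $0$ otherwise, and $Z_n\sim\mathcal N(0,q^\ast B\sigma^2)$ independent of everything else. Starting from uniform $\rho'_0(i)=\alpha$, the posterior is updated by Bayes' rule: after $Y_n=y$, $\rho'_{n+1}(i)\propto\rho'_n(i)G(y;1,q^\ast B\sigma^2)$ if $i\in A^1_n$ and $\propto\rho'_n(i)G(y;0,q^\ast B\sigma^2)$ otherwise, where $G(\cdot;\mu,s^2)$ is the $\mathcal N(\mu,s^2)$ density.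 $\mathcal F_n$ is the sigma-field generated by the past observations and measurements. $C_{\mathrm{BAWGN}}(q,s^2):=-\int p(y)\log p(y)dy-\frac12\log(2\pi es^2)$ with $p(y)=(1-q)G(y;0,s^2)+qG(y;1,s^2)$. *)

theory Defs
  imports "HOL-Probability.Probability"
begin

definition G :: "real \<Rightarrow> real \<Rightarrow> real \<Rightarrow> real" where
  "G y mu s2 = exp (- ((y - mu)^2) / (2 * s2)) / sqrt (2 * pi * s2)"

text \<open>Binary-input AWGN mutual information with input probability q (logs base 2).\<close>
definition C_BAWGN :: "real \<Rightarrow> real \<Rightarrow> real" where
  "C_BAWGN q s2 =
     - (\<integral>y. ((1 - q) * G y 0 s2 + q * G y 1 s2) * log 2 ((1 - q) * G y 0 s2 + q * G y 1 s2) \<partial>lborel)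
     - 1/2 * log 2 (2 * pi * exp 1 * s2)"

definition U :: "nat \<Rightarrow> (nat \<Rightarrow> real) \<Rightarrow> real" where
  "U M rho = (\<Sum>i<M. rho i * log 2 (rho i / (1 - rho i)))"

definition lik :: "real \<Rightarrow> nat set \<Rightarrow> real \<Rightarrow> nat \<Rightarrow> real" where
  "lik s2 A y i = (if i \<in> A then G y 1 s2 else G y 0 s2)"

definition pred :: "nat \<Rightarrow> real \<Rightarrow> (nat \<Rightarrow> real) \<Rightarrow> nat set \<Rightarrow> real \<Rightarrow> real" where
  "pred M s2 rho A y = (\<Sum>j<M. rho j * lik s2 A y j)"

definition post :: "nat \<Rightarrow> real \<Rightarrow> (nat \<Rightarrow> real) \<Rightarrow> nat set \<Rightarrow> real \<Rightarrow> nat \<Rightarrow> real" where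
  "post M s2 rho A y i = rho i * lik s2 A y i / pred M s2 rho A y"

text \<open>Posterior rho'_n after probed sets As 0, ..., As (n-1) and observations ys 0, ..., ys (n-1),
  starting from the uniform prior alpha = 1/M.\<close>
fun rho_seq :: "nat \<Rightarrow> real \<Rightarrow> (nat \<Rightarrow> nat set) \<Rightarrow> (nat \<Rightarrow> real) \<Rightarrow> nat \<Rightarrow> nat \<Rightarrow> real" where
  "rho_seq M s2 As ys 0 = (\<lambda>i. 1 / real M)"
| "rho_seq M s2 As ys (Suc n) = post M s2 (rho_seq M s2 As ys n) (As n) (ys n)"

definition probe_sets :: "nat \<Rightarrow> nat \<Rightarrow> nat set set" where
  "probe_sets M K = {A. A \<subseteq> {..<M} \<and> card A = K}"

text \<open>E[U(rho'_{n+1}) | F_n] when rho'_n = rho: the probed set is uniform over the K-subsets,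
  independent of the past, and given A the observation has density pred M s2 rho A.\<close>
definition expected_next_U :: "nat \<Rightarrow> nat \<Rightarrow> real \<Rightarrow> (nat \<Rightarrow> real) \<Rightarrow> real" where
  "expected_next_U M K s2 rho =
     (\<Sum>A\<in>probe_sets M K. (\<integral>y. pred M s2 rho A y * U M (post M s2 rho A y) \<partial>lborel))
       / real (card (probe_sets M K))"

end

theory Submission
  imports Defs
begin

(* Let g_i = lik s A y i, write p = mix_density q s y (q = K/M) for the output density of the
   binary-input channel, and v_i = pred - r_i g_i = sum over j <> i of r_j g_j.  Then
   pred * U(post) = sum_i r_i g_i log (r_i g_i / v_i), and splitting
   r_i g_i / v_i = (r_i / (1 - r_i)) (g_i / p) / (v_i / ((1 - r_i) p))
   with -ln x >= 1 - x bounds each summand below by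
   r_i g_i (log (r_i / (1 - r_i)) + log (g_i / p) + (1 - v_i / ((1 - r_i) p)) / ln 2).
   Averaged over the uniformly random probe set A, g_i becomes p and g_i log (g_i / p) becomes the
   mutual-information density, which integrates to C_BAWGN q s; the correction term has
   nonnegative average because two distinct sections are probed together with probability
   K (K - 1) / (M (M - 1)) <= q^2, so g_i v_i averages to at most (1 - r_i) p^2. *)

definition mix_density :: "real \<Rightarrow> real \<Rightarrow> real \<Rightarrow> real" where
  "mix_density q s y = (1 - q) * G y 0 s + q * G y 1 s"

definition info_density :: "real \<Rightarrow> real \<Rightarrow> real \<Rightarrow> real" where
  "info_density q s y =
     (1 - q) * G y 0 s * log 2 (G y 0 s / mix_density q s y)
       + q * G y 1 s * log 2 (G y 1 s / mix_density q s y)"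

section \<open>Gaussian densities\<close>

lemma G_eq_normal_density: "0 < s \<Longrightarrow> G y \<mu> s = normal_density \<mu> (sqrt s) y"
  unfolding G_def normal_density_def by simp

lemma G_pos: "0 < s \<Longrightarrow> 0 < G y \<mu> s"
  unfolding G_def by simp

lemma borel_measurable_G [measurable]: "(\<lambda>y. G y \<mu> s) \<in> borel_measurable borel"
  unfolding G_def by measurable

lemma integrable_G: "0 < s \<Longrightarrow> integrable lborel (\<lambda>y. G y \<mu> s)"
  by (simp add: G_eq_normal_density)

lemma integral_G: "0 < s \<Longrightarrow> (\<integral>y. G y \<mu> s \<partial>lborel) = 1"
  by (simp add: G_eq_normal_density)

lemma integrable_G_mult_one_plus_square:
  assumes "0 < s"
  shows "integrable lborel (\<lambda>y. G y \<mu> s * (1 + y\<^sup>2))"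
proof -
  have moment: "integrable lborel (\<lambda>y. G y \<mu> s * (y - \<mu>) ^ k)" for k
    using integrable_normal_moment[of "sqrt s" \<mu> k] assms by (simp add: G_eq_normal_density)
  have "G y \<mu> s * (1 + y\<^sup>2) =
      (1 + \<mu>\<^sup>2) * G y \<mu> s + 2 * \<mu> * (G y \<mu> s * (y - \<mu>) ^ 1) + G y \<mu> s * (y - \<mu>) ^ 2" for y
    by (simp add: power2_eq_square algebra_simps)
  then show ?thesis
    using integrable_G[OF assms] moment[of 1] moment[of 2] by simp
qed

lemma integral_G_log_G:
  assumes "0 < s"
  shows "(\<integral>y. G y \<mu> s * log 2 (G y \<mu> s) \<partial>lborel) = - log 2 (2 * pi * exp 1 * s) / 2"
proof -
  let ?M = "density lborel (normal_density \<mu> (sqrt s))"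
  interpret information_space ?M 2
    by (intro information_space.intro prob_space_normal_density)
       (simp_all add: information_space_axioms_def assms)
  have D: "distributed ?M lborel (\<lambda>y. y) (normal_density \<mu> (sqrt s))"
    unfolding distributed_def by (auto simp: distr_id2)
  show ?thesis
    using entropy_normal_density[OF _ D] entropy_distr[OF D] assms
    by (simp add: G_eq_normal_density)
qed

lemma abs_log_le_between:
  fixes a b x :: real
  assumes "0 < a" "0 < b" "min a b \<le> x" "x \<le> max a b"
  shows "\<bar>log 2 x\<bar> \<le> \<bar>log 2 a\<bar> + \<bar>log 2 b\<bar>"
proof -
  have "0 < x" using assms by linarith
  then have "min (log 2 a) (log 2 b) \<le> log 2 x" "log 2 x \<le> max (log 2 a) (log 2 b)"
    using assms by (auto simp: min_def max_def split: if_splits)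
  then show ?thesis by linarith
qed

lemma abs_log_between_G_le:
  assumes "0 < s"
  obtains C where
    "\<And>y x. min (G y 0 s) (G y 1 s) \<le> x \<Longrightarrow> x \<le> max (G y 0 s) (G y 1 s) \<Longrightarrow>
      \<bar>log 2 x\<bar> \<le> C * (1 + y\<^sup>2)"
proof
  define c where "c = \<bar>log 2 (sqrt (2 * pi * s))\<bar>"
  have log_G: "log 2 (G y \<mu> s) = - ((y - \<mu>)\<^sup>2 / (2 * s * ln 2)) - log 2 (sqrt (2 * pi * s))" for y \<mu>
    unfolding G_def log_def using assms by (simp add: ln_div diff_divide_distrib)
  have log_G_le: "\<bar>log 2 (G y \<mu> s)\<bar> \<le> (1 / (s * ln 2) + c) * (1 + y\<^sup>2)" if "\<bar>\<mu>\<bar> \<le> 1" for y \<mu>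
  proof -
    have "(y - \<mu>)\<^sup>2 \<le> 2 * (1 + y\<^sup>2)"
      using that zero_le_power2[of "y + \<mu>"] abs_square_le_1[of \<mu>]
      by (simp add: power2_eq_square algebra_simps)
    then have "(y - \<mu>)\<^sup>2 / (2 * s * ln 2) \<le> 1 / (s * ln 2) * (1 + y\<^sup>2)"
      using assms by (simp add: field_simps)
    moreover have "c \<le> c * (1 + y\<^sup>2)" by (simp add: c_def mult_le_cancel_left1)
    moreover have "0 \<le> (y - \<mu>)\<^sup>2 / (2 * s * ln 2)" using assms by simp
    ultimately show ?thesis unfolding log_G c_def by (simp add: distrib_right)
  qed
  show "\<bar>log 2 x\<bar> \<le> (2 / (s * ln 2) + 2 * c) * (1 + y\<^sup>2)"
    if "min (G y 0 s) (G y 1 s) \<le> x" "x \<le> max (G y 0 s) (G y 1 s)" for y x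
  proof -
    have "\<bar>log 2 x\<bar> \<le> \<bar>log 2 (G y 0 s)\<bar> + \<bar>log 2 (G y 1 s)\<bar>"
      using abs_log_le_between[OF G_pos[OF assms] G_pos[OF assms] that] .
    also have "\<dots> \<le> (1 / (s * ln 2) + c) * (1 + y\<^sup>2) + (1 / (s * ln 2) + c) * (1 + y\<^sup>2)"
      using log_G_le[of 0 y] log_G_le[of 1 y] by (intro add_mono) auto
    finally show ?thesis by (simp add: algebra_simps)
  qed
qed

lemma integrable_dominated_by_G:
  assumes "0 < s" and [measurable]: "f \<in> borel_measurable lborel"
    and "\<And>y. \<bar>f y\<bar> \<le> C * ((G y 0 s + G y 1 s) * (1 + y\<^sup>2))"
  shows "integrable lborel f"
proof (rule Bochner_Integration.integrable_bound)
  show "integrable lborel (\<lambda>y. C * ((G y 0 s + G y 1 s) * (1 + y\<^sup>2)))"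
    using integrable_G_mult_one_plus_square[OF \<open>0 < s\<close>] by (simp add: distrib_right)
  show "AE y in lborel. norm (f y) \<le> norm (C * ((G y 0 s + G y 1 s) * (1 + y\<^sup>2)))"
    using assms(3) by (intro AE_I2) (metis abs_ge_self order_trans real_norm_def)
qed simp

lemma mix_density_between:
  assumes "0 \<le> q" "q \<le> 1"
  shows "min (G y 0 s) (G y 1 s) \<le> mix_density q s y" "mix_density q s y \<le> max (G y 0 s) (G y 1 s)"
proof -
  have "(1 - q) * min (G y 0 s) (G y 1 s) + q * min (G y 0 s) (G y 1 s) \<le> mix_density q s y"
    "mix_density q s y \<le> (1 - q) * max (G y 0 s) (G y 1 s) + q * max (G y 0 s) (G y 1 s)"
    unfolding mix_density_def using assms by (auto intro!: add_mono mult_left_mono)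
  then show "min (G y 0 s) (G y 1 s) \<le> mix_density q s y" "mix_density q s y \<le> max (G y 0 s) (G y 1 s)"
    by (simp_all add: algebra_simps)
qed

lemma mix_density_pos:
  assumes "0 < s" "0 \<le> q" "q \<le> 1"
  shows "0 < mix_density q s y"
  using mix_density_between(1)[OF assms(2,3), of y s] G_pos[OF assms(1), of y 0] G_pos[OF assms(1), of y 1]
  by linarith

lemma integrable_mix_density: "0 < s \<Longrightarrow> integrable lborel (mix_density q s)"
  unfolding mix_density_def by (simp add: integrable_G)

lemma integral_mix_density: "0 < s \<Longrightarrow> (\<integral>y. mix_density q s y \<partial>lborel) = 1"
  unfolding mix_density_def by (simp add: integrable_G integral_G)

lemma integrable_mix_density_log:
  assumes "0 < s" "0 \<le> q" "q \<le> 1"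
  shows "integrable lborel (\<lambda>y. mix_density q s y * log 2 (mix_density q s y))"
proof -
  obtain C where C: "\<And>y x. min (G y 0 s) (G y 1 s) \<le> x \<Longrightarrow> x \<le> max (G y 0 s) (G y 1 s) \<Longrightarrow>
      \<bar>log 2 x\<bar> \<le> C * (1 + y\<^sup>2)"
    using abs_log_between_G_le[OF assms(1)] by blast
  show ?thesis
  proof (rule integrable_dominated_by_G[OF assms(1)])
    show "(\<lambda>y. mix_density q s y * log 2 (mix_density q s y)) \<in> borel_measurable lborel"
      unfolding mix_density_def by measurable
    fix y
    have "mix_density q s y \<le> G y 0 s + G y 1 s"
      using mix_density_between(2)[OF assms(2,3), where y=y and s=s] G_pos[OF assms(1), of y 0] G_pos[OF assms(1), of y 1]
      by linarith
    then have "\<bar>mix_density q s y * log 2 (mix_density q s y)\<bar> \<le> (G y 0 s + G y 1 s) * (C * (1 + y\<^sup>2))"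
      using C[OF mix_density_between[OF assms(2,3)]] mix_density_pos[OF assms, of y]
      by (auto simp: abs_mult intro!: mult_mono)
    then show "\<bar>mix_density q s y * log 2 (mix_density q s y)\<bar> \<le> C * ((G y 0 s + G y 1 s) * (1 + y\<^sup>2))"
      by (simp add: algebra_simps)
  qed
qed

lemma integrable_G_log_G:
  assumes "0 < s" "\<mu> = 0 \<or> \<mu> = 1"
  shows "integrable lborel (\<lambda>y. G y \<mu> s * log 2 (G y \<mu> s))"
  using integrable_mix_density_log[OF assms(1), of 0] integrable_mix_density_log[OF assms(1), of 1] assms(2)
  by (auto simp: mix_density_def)

lemma info_density_eq:
  assumes "0 < s" "0 \<le> q" "q \<le> 1"
  shows "info_density q s y =
    (1 - q) * (G y 0 s * log 2 (G y 0 s)) + q * (G y 1 s * log 2 (G y 1 s))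
      - mix_density q s y * log 2 (mix_density q s y)"
proof -
  have log_ratio: "log 2 (G y \<mu> s / mix_density q s y) = log 2 (G y \<mu> s) - log 2 (mix_density q s y)" for \<mu>
    using G_pos[OF assms(1), of y \<mu>] mix_density_pos[OF assms, of y] by (simp add: log_divide)
  show ?thesis
    unfolding info_density_def log_ratio by (simp add: mix_density_def algebra_simps)
qed

lemma integrable_info_density:
  assumes "0 < s" "0 \<le> q" "q \<le> 1"
  shows "integrable lborel (info_density q s)"
  unfolding info_density_eq[OF assms, abs_def] using assms
  by (simp add: integrable_G_log_G integrable_mix_density_log)

lemma integral_info_density:
  assumes "0 < s" "0 \<le> q" "q \<le> 1"
  shows "(\<integral>y. info_density q s y \<partial>lborel) = C_BAWGN q s"
proof -
  have "(\<integral>y. info_density q s y \<partial>lborel) =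
      (1 - q) * (\<integral>y. G y 0 s * log 2 (G y 0 s) \<partial>lborel) + q * (\<integral>y. G y 1 s * log 2 (G y 1 s) \<partial>lborel)
        - (\<integral>y. mix_density q s y * log 2 (mix_density q s y) \<partial>lborel)"
    unfolding info_density_eq[OF assms] using assms
    by (simp add: integrable_G_log_G integrable_mix_density_log)
  also have "\<dots> = C_BAWGN q s"
    using assms(1) by (simp add: integral_G_log_G C_BAWGN_def mix_density_def field_simps)
  finally show ?thesis .
qed

section \<open>Counting probe sets\<close>

lemma finite_probe_sets: "finite (probe_sets M K)"
  unfolding probe_sets_def by (rule finite_subset[of _ "Pow {..<M}"]) auto

lemma card_probe_sets: "card (probe_sets M K) = M choose K"
  unfolding probe_sets_def using n_subsets[of "{..<M}" K] by simp

lemma card_subsets_containing: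
  assumes "finite S" "B \<subseteq> S" "card B \<le> k"
  shows "card {A. A \<subseteq> S \<and> card A = k \<and> B \<subseteq> A} = (card S - card B) choose (k - card B)"
proof -
  let ?C = "{C. C \<subseteq> S - B \<and> card C = k - card B}"
  have fin: "finite B" "\<And>A. A \<subseteq> S \<Longrightarrow> finite A"
    using assms finite_subset by blast+
  have "{A. A \<subseteq> S \<and> card A = k \<and> B \<subseteq> A} = (\<lambda>C. C \<union> B) ` ?C"
  proof (intro set_eqI iffI)
    fix A assume "A \<in> {A. A \<subseteq> S \<and> card A = k \<and> B \<subseteq> A}"
    then have A: "A \<subseteq> S" "card A = k" "B \<subseteq> A" by auto
    then have "A - B \<in> ?C" "A = (A - B) \<union> B"
      using fin by (auto simp: card_Diff_subset)
    then show "A \<in> (\<lambda>C. C \<union> B) ` ?C" by blast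
  next
    fix A assume "A \<in> (\<lambda>C. C \<union> B) ` ?C"
    then obtain C where C: "C \<subseteq> S - B" "card C = k - card B" "A = C \<union> B" by blast
    have "finite C" using C(1) fin(2) by blast
    moreover have "C \<inter> B = {}" using C(1) by blast
    ultimately have "card A = card C + card B"
      using C(3) card_Un_disjoint[of C B] fin(1) by simp
    then show "A \<in> {A. A \<subseteq> S \<and> card A = k \<and> B \<subseteq> A}"
      using C assms by auto
  qed
  moreover have "inj_on (\<lambda>C. C \<union> B) ?C"
    by (rule inj_onI) blast
  ultimately have "card {A. A \<subseteq> S \<and> card A = k \<and> B \<subseteq> A} = card ?C"
    by (simp add: card_image)
  also have "\<dots> = (card S - card B) choose (k - card B)"
    using n_subsets[of "S - B" "k - card B"] assms by (simp add: card_Diff_subset fin)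
  finally show ?thesis .
qed

lemma card_probe_sets_containing:
  assumes "i < M"
  shows "card {A \<in> probe_sets M K. i \<in> A} * M = card (probe_sets M K) * K"
proof (cases K)
  case 0
  have "A = {}" if "A \<in> probe_sets M K" for A
    using that 0 finite_subset[of A "{..<M}"] unfolding probe_sets_def by auto
  then have none: "{A \<in> probe_sets M K. i \<in> A} = {}" by blast
  show ?thesis unfolding none using 0 by simp
next
  case (Suc k)
  have "{A \<in> probe_sets M K. i \<in> A} = {A. A \<subseteq> {..<M} \<and> card A = K \<and> {i} \<subseteq> A}"
    unfolding probe_sets_def by auto
  then have "card {A \<in> probe_sets M K. i \<in> A} = (M - 1) choose k"
    using card_subsets_containing[of "{..<M}" "{i}" K] assms Suc by simp
  then show ?thesis
    unfolding card_probe_sets Suc by (metis binomial_absorption mult.commute)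
qed

lemma card_probe_sets_containing_pair:
  assumes "i < M" "j < M" "i \<noteq> j"
  shows "card {A \<in> probe_sets M K. i \<in> A \<and> j \<in> A} * (M * (M - 1)) = card (probe_sets M K) * (K * (K - 1))"
proof (cases "K \<le> 1")
  case True
  have none: "{A \<in> probe_sets M K. i \<in> A \<and> j \<in> A} = {}"
  proof -
    have "card {i, j} \<le> card A" if "A \<in> probe_sets M K" "{i, j} \<subseteq> A" for A
      using that finite_subset[of A "{..<M}"] unfolding probe_sets_def by (auto intro: card_mono)
    moreover have "card {i, j} = 2" using assms(3) by simp
    ultimately show ?thesis using True unfolding probe_sets_def by fastforce
  qed
  moreover have "K * (K - 1) = 0" using True by (cases K) auto
  ultimately show ?thesis unfolding none by simp
next
  case False
  define k where "k = K - 2"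
  have K: "K = Suc (Suc k)" using False by (simp add: k_def)
  have "{A \<in> probe_sets M K. i \<in> A \<and> j \<in> A} = {A. A \<subseteq> {..<M} \<and> card A = K \<and> {i, j} \<subseteq> A}"
    unfolding probe_sets_def by auto
  also have "card \<dots> = (card {..<M} - card {i, j}) choose (K - card {i, j})"
    using assms K by (intro card_subsets_containing) auto
  finally have "card {A \<in> probe_sets M K. i \<in> A \<and> j \<in> A} = (M - 2) choose k"
    using assms(3) K by (simp add: numeral_2_eq_2)
  moreover have "(M choose K) * (K * (K - 1)) = M * ((M - 1) * ((M - 2) choose k))"
  proof -
    have "(M choose K) * (K * (K - 1)) = Suc k * (Suc (Suc k) * (M choose Suc (Suc k)))"
      unfolding K diff_Suc_1 by (simp only: mult.commute mult.left_commute)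
    also have "\<dots> = M * (Suc k * ((M - 1) choose Suc k))"
      by (simp only: binomial_absorption[of "Suc k" M] mult.commute mult.left_commute)
    also have "\<dots> = M * ((M - 1) * ((M - 2) choose k))"
      by (simp only: binomial_absorption[of k "M - 1"] diff_diff_left one_add_one)
    finally show ?thesis .
  qed
  ultimately show ?thesis by (simp add: card_probe_sets mult.commute mult.left_commute)
qed

lemma card_probe_sets_containing_pair_le:
  assumes "i < M" "j < M" "i \<noteq> j" "K \<le> M"
  shows "real (card {A \<in> probe_sets M K. i \<in> A \<and> j \<in> A})
    \<le> real (card (probe_sets M K)) * (real K / real M)\<^sup>2"
proof -
  define N where "N = real (card (probe_sets M K))"
  define c where "c = real (card {A \<in> probe_sets M K. i \<in> A \<and> j \<in> A})"
  have M: "2 \<le> real M" using assms(1-3) by linarith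
  have K_eq: "real (K * (K - 1)) = real K * (real K - 1)" by (cases K) (simp_all add: algebra_simps)
  have M_eq: "real (M * (M - 1)) = real M * (real M - 1)" using M by (simp add: of_nat_diff)
  have "c * real (M * (M - 1)) = N * real (K * (K - 1))"
    using card_probe_sets_containing_pair[OF assms(1-3), of K] unfolding c_def N_def
    by (simp only: of_nat_mult[symmetric])
  then have pair: "c * (real M * (real M - 1)) = N * (real K * (real K - 1))"
    unfolding K_eq M_eq .
  have "c * real M ^ 2 * (real M - 1) = real M * (c * (real M * (real M - 1)))"
    by (simp add: power2_eq_square algebra_simps)
  also have "\<dots> = N * real K * (real M * (real K - 1))"
    unfolding pair by (simp add: algebra_simps)
  also have "\<dots> \<le> N * real K * (real K * (real M - 1))"
    using assms(4) by (intro mult_left_mono) (auto simp: N_def algebra_simps)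
  finally have "c * real M ^ 2 * (real M - 1) \<le> N * real K ^ 2 * (real M - 1)"
    by (simp add: power2_eq_square algebra_simps)
  then have "c * real M ^ 2 \<le> N * real K ^ 2"
    using mult_right_le_imp_le M by simp
  then show ?thesis
    using M unfolding c_def N_def by (simp add: power_divide field_simps)
qed

lemma lik_pos: "0 < s \<Longrightarrow> 0 < lik s A y i"
  unfolding lik_def by (simp add: G_pos)

lemma sum_probe_sets_lik:
  assumes "i < M"
  shows "(\<Sum>A\<in>probe_sets M K. f (lik s A y i)) =
    real (card (probe_sets M K)) * ((1 - real K / real M) * f (G y 0 s) + real K / real M * f (G y 1 s))"
proof -
  let ?P = "probe_sets M K"
  have "f (lik s A y i) = f (G y 0 s) + of_bool (i \<in> A) * (f (G y 1 s) - f (G y 0 s))" for A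
    unfolding lik_def by simp
  then have "(\<Sum>A\<in>?P. f (lik s A y i)) =
      real (card ?P) * f (G y 0 s) + real (card {A \<in> ?P. i \<in> A}) * (f (G y 1 s) - f (G y 0 s))"
    by (simp add: sum.distrib Int_def finite_probe_sets)
  moreover have "real (card {A \<in> ?P. i \<in> A}) = real (card ?P) * (real K / real M)"
    using card_probe_sets_containing[OF assms, of K] assms
    by (simp add: field_simps flip: of_nat_mult)
  ultimately show ?thesis by (simp add: algebra_simps diff_divide_distrib)
qed

lemma sum_probe_sets_lik_mult_lik:
  assumes "i < M" "j < M" "i \<noteq> j" "K \<le> M"
  shows "(\<Sum>A\<in>probe_sets M K. lik s A y i * lik s A y j)
    \<le> real (card (probe_sets M K)) * (mix_density (real K / real M) s y)\<^sup>2"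
proof -
  let ?P = "probe_sets M K"
  define q where "q = real K / real M"
  define N where "N = real (card ?P)"
  define c where "c = real (card {A \<in> ?P. i \<in> A \<and> j \<in> A})"
  define G0 where "G0 = G y 0 s"
  define G1 where "G1 = G y 1 s"
  have sum_lik: "(\<Sum>A\<in>?P. lik s A y k) = N * mix_density q s y" if "k < M" for k
    using sum_probe_sets_lik[OF that, of "\<lambda>x. x"] unfolding N_def q_def mix_density_def by simp
  have "lik s A y i * lik s A y j =
      G0 * lik s A y i + G0 * lik s A y j - G0\<^sup>2 + of_bool (i \<in> A \<and> j \<in> A) * (G1 - G0)\<^sup>2" for A
    unfolding lik_def G0_def G1_def by (simp add: power2_eq_square algebra_simps)
  then have "(\<Sum>A\<in>?P. lik s A y i * lik s A y j) =
      G0 * (\<Sum>A\<in>?P. lik s A y i) + G0 * (\<Sum>A\<in>?P. lik s A y j) - N * G0\<^sup>2 + c * (G1 - G0)\<^sup>2"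
    by (simp add: sum.distrib sum_subtractf sum_distrib_left Int_def finite_probe_sets N_def c_def)
  also have "\<dots> = 2 * G0 * N * mix_density q s y - N * G0\<^sup>2 + c * (G1 - G0)\<^sup>2"
    unfolding sum_lik[OF assms(1)] sum_lik[OF assms(2)] by (simp add: algebra_simps)
  also have "\<dots> \<le> 2 * G0 * N * mix_density q s y - N * G0\<^sup>2 + N * q\<^sup>2 * (G1 - G0)\<^sup>2"
    using card_probe_sets_containing_pair_le[OF assms] unfolding c_def N_def q_def
    by (simp add: mult_right_mono)
  also have "\<dots> = N * (mix_density q s y)\<^sup>2"
    by (simp add: mix_density_def G0_def G1_def power2_eq_square algebra_simps)
  finally show ?thesis unfolding N_def q_def .
qed

section \<open>The posterior\<close>

lemma pred_pos:
  assumes "0 < s" "0 < M" "\<And>i. i < M \<Longrightarrow> 0 < r i"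
  shows "0 < pred M s r A y"
  unfolding pred_def using assms lik_pos[OF assms(1)] by (intro sum_pos) auto

lemma post_pos:
  assumes "0 < s" "0 < M" "\<And>i. i < M \<Longrightarrow> 0 < r i" "i < M"
  shows "0 < post M s r A y i"
  unfolding post_def using assms pred_pos[OF assms(1-3)] lik_pos[OF assms(1)] by simp

lemma sum_post: "pred M s r A y \<noteq> 0 \<Longrightarrow> (\<Sum>i<M. post M s r A y i) = 1"
  unfolding post_def by (simp add: sum_divide_distrib[symmetric] pred_def)

lemma rho_seq_pos: "0 < s \<Longrightarrow> 0 < M \<Longrightarrow> i < M \<Longrightarrow> 0 < rho_seq M s As ys n i"
  by (induction n arbitrary: i) (simp_all add: post_pos)

lemma sum_rho_seq:
  assumes "0 < s" "0 < M"
  shows "(\<Sum>i<M. rho_seq M s As ys n i) = 1"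
proof (cases n)
  case (Suc m)
  have "0 < pred M s (rho_seq M s As ys m) (As m) (ys m)"
    using assms by (intro pred_pos) (simp_all add: rho_seq_pos)
  then show ?thesis using Suc by (simp add: sum_post)
qed (use assms in simp)

lemma log_mult_divide_ge:
  fixes a b g v p :: real
  assumes "0 < a" "0 < b" "0 < g" "0 < v" "0 < p"
  shows "log 2 (a / b) + log 2 (g / p) + (1 - v / (b * p)) / ln 2 \<le> log 2 (a * g / v)"
proof -
  have "a * g / v = (a / b) * (g / p) / (v / (b * p))" using assms by (simp add: field_simps)
  then have "log 2 (a * g / v) = log 2 (a / b) + log 2 (g / p) - log 2 (v / (b * p))"
    using assms by (simp add: log_mult log_divide)
  moreover have "log 2 (v / (b * p)) \<le> (v / (b * p) - 1) / ln 2"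
    using ln_le_minus_one[of "v / (b * p)"] assms unfolding log_def by (simp add: divide_right_mono)
  ultimately show ?thesis by (simp add: diff_divide_distrib)
qed

locale posterior =
  fixes M :: nat and s :: real and r :: "nat \<Rightarrow> real"
  assumes two_le_M: "2 \<le> M" and s_pos: "0 < s"
    and r_pos: "\<And>i. i < M \<Longrightarrow> 0 < r i" and sum_r: "(\<Sum>i<M. r i) = 1"
begin

lemma M_pos: "0 < M"
  using two_le_M by simp

lemma pred_gt_0: "0 < pred M s r A y"
  using s_pos M_pos r_pos by (rule pred_pos)

lemma sum_r_others: "i < M \<Longrightarrow> (\<Sum>j\<in>{..<M} - {i}. r j) = 1 - r i"
  using sum_r by (simp add: sum_diff1)

lemma r_less_1:
  assumes "i < M"
  shows "r i < 1"
proof -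
  define j where "j = (if i = 0 then 1 else 0 :: nat)"
  have "j < M" "j \<noteq> i" using two_le_M by (auto simp: j_def)
  then have "0 < (\<Sum>j\<in>{..<M} - {i}. r j)"
    using r_pos by (intro sum_pos2[of _ j]) (auto intro: less_imp_le)
  then show ?thesis using sum_r_others[OF assms] by simp
qed

lemma pred_minus_eq:
  "i < M \<Longrightarrow> pred M s r A y - r i * lik s A y i = (\<Sum>j\<in>{..<M} - {i}. r j * lik s A y j)"
  unfolding pred_def by (simp add: sum_diff1)

lemma pred_minus_between:
  assumes "i < M"
  shows "(1 - r i) * min (G y 0 s) (G y 1 s) \<le> pred M s r A y - r i * lik s A y i"
    "pred M s r A y - r i * lik s A y i \<le> (1 - r i) * max (G y 0 s) (G y 1 s)"
proof -
  have "(\<Sum>j\<in>{..<M} - {i}. r j * min (G y 0 s) (G y 1 s)) \<le> (\<Sum>j\<in>{..<M} - {i}. r j * lik s A y j)"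
    "(\<Sum>j\<in>{..<M} - {i}. r j * lik s A y j) \<le> (\<Sum>j\<in>{..<M} - {i}. r j * max (G y 0 s) (G y 1 s))"
    using r_pos by (auto intro!: sum_mono mult_left_mono simp: lik_def less_imp_le)
  then show "(1 - r i) * min (G y 0 s) (G y 1 s) \<le> pred M s r A y - r i * lik s A y i"
    "pred M s r A y - r i * lik s A y i \<le> (1 - r i) * max (G y 0 s) (G y 1 s)"
    unfolding pred_minus_eq[OF assms] sum_distrib_right[symmetric] sum_r_others[OF assms] by simp_all
qed

lemma pred_minus_pos:
  assumes "i < M"
  shows "0 < pred M s r A y - r i * lik s A y i"
proof -
  have "0 < (1 - r i) * min (G y 0 s) (G y 1 s)"
    using r_less_1[OF assms] G_pos[OF s_pos] by simp
  then show ?thesis using pred_minus_between(1)[OF assms, of y A] by linarith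
qed

lemma pred_mult_U_post:
  "pred M s r A y * U M (post M s r A y) =
    (\<Sum>i<M. r i * lik s A y i * log 2 (r i * lik s A y i / (pred M s r A y - r i * lik s A y i)))"
  unfolding U_def sum_distrib_left
proof (rule sum.cong[OF refl])
  fix i assume "i \<in> {..<M}"
  have m: "0 < pred M s r A y" by (rule pred_gt_0)
  have v: "0 < pred M s r A y - r i * lik s A y i"
    using \<open>i \<in> {..<M}\<close> pred_minus_pos by blast
  have odds: "post M s r A y i / (1 - post M s r A y i) = r i * lik s A y i / (pred M s r A y - r i * lik s A y i)"
    using m v unfolding post_def by (simp add: field_simps)
  show "pred M s r A y * (post M s r A y i * log 2 (post M s r A y i / (1 - post M s r A y i))) =
      r i * lik s A y i * log 2 (r i * lik s A y i / (pred M s r A y - r i * lik s A y i))"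
    unfolding odds using m by (simp add: post_def)
qed

lemma abs_log_odds_le:
  assumes C: "\<And>x. min (G y 0 s) (G y 1 s) \<le> x \<Longrightarrow> x \<le> max (G y 0 s) (G y 1 s) \<Longrightarrow>
      \<bar>log 2 x\<bar> \<le> C * (1 + y\<^sup>2)"
    and i: "i < M"
  shows "\<bar>log 2 (r i * lik s A y i / (pred M s r A y - r i * lik s A y i))\<bar>
    \<le> (\<bar>log 2 (r i)\<bar> + \<bar>log 2 (1 - r i)\<bar> + 2 * C) * (1 + y\<^sup>2)"
proof -
  let ?g = "lik s A y i"
  define w where "w = (pred M s r A y - r i * ?g) / (1 - r i)"
  define Y where "Y = 1 + y\<^sup>2"
  have ri: "0 < r i" "r i < 1" using r_pos r_less_1 i by auto
  have w: "min (G y 0 s) (G y 1 s) \<le> w" "w \<le> max (G y 0 s) (G y 1 s)"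
    using pred_minus_between[OF i, where A=A and y=y] ri unfolding w_def by (simp_all add: field_simps)
  have "0 < w" using w(1) G_pos[OF s_pos, of y 0] G_pos[OF s_pos, of y 1] by linarith
  then have "log 2 (r i * ?g / (pred M s r A y - r i * ?g)) = log 2 (r i) - log 2 (1 - r i) + log 2 ?g - log 2 w"
    using ri lik_pos[OF s_pos, of A y i] unfolding w_def by (simp add: log_mult log_divide field_simps)
  then have "\<bar>log 2 (r i * ?g / (pred M s r A y - r i * ?g))\<bar>
      \<le> \<bar>log 2 (r i)\<bar> + \<bar>log 2 (1 - r i)\<bar> + \<bar>log 2 ?g\<bar> + \<bar>log 2 w\<bar>"
    by linarith
  moreover have "\<bar>log 2 ?g\<bar> \<le> C * Y" unfolding Y_def by (rule C) (auto simp: lik_def)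
  moreover have "\<bar>log 2 w\<bar> \<le> C * Y" unfolding Y_def using C w by blast
  moreover have "\<bar>log 2 (r i)\<bar> + \<bar>log 2 (1 - r i)\<bar> \<le> (\<bar>log 2 (r i)\<bar> + \<bar>log 2 (1 - r i)\<bar>) * Y"
    unfolding Y_def by (simp add: mult_le_cancel_left1)
  ultimately show ?thesis by (simp add: algebra_simps flip: Y_def)
qed

lemma integrable_pred_mult_U_post: "integrable lborel (\<lambda>y. pred M s r A y * U M (post M s r A y))"
proof -
  obtain C where C: "\<And>y x. min (G y 0 s) (G y 1 s) \<le> x \<Longrightarrow> x \<le> max (G y 0 s) (G y 1 s) \<Longrightarrow>
      \<bar>log 2 x\<bar> \<le> C * (1 + y\<^sup>2)"
    using abs_log_between_G_le[OF s_pos] by blast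
  define c where "c i = \<bar>log 2 (r i)\<bar> + \<bar>log 2 (1 - r i)\<bar> + 2 * C" for i
  have summand_le: "\<bar>r i * lik s A y i * log 2 (r i * lik s A y i / (pred M s r A y - r i * lik s A y i))\<bar>
      \<le> c i * ((G y 0 s + G y 1 s) * (1 + y\<^sup>2))" if i: "i < M" for i y
  proof -
    have "r i * lik s A y i \<le> lik s A y i"
      using r_pos[OF i] r_less_1[OF i] lik_pos[OF s_pos, of A y i] by (intro mult_left_le_one_le) auto
    moreover have "lik s A y i \<le> G y 0 s + G y 1 s"
      using G_pos[OF s_pos, of y 0] G_pos[OF s_pos, of y 1] by (simp add: lik_def)
    moreover have "0 < r i * lik s A y i" using r_pos[OF i] lik_pos[OF s_pos] by simp
    ultimately have "\<bar>r i * lik s A y i\<bar> \<le> G y 0 s + G y 1 s" by linarith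
    then have "\<bar>r i * lik s A y i\<bar> * \<bar>log 2 (r i * lik s A y i / (pred M s r A y - r i * lik s A y i))\<bar>
        \<le> (G y 0 s + G y 1 s) * (c i * (1 + y\<^sup>2))"
      using abs_log_odds_le[OF C i] G_pos[OF s_pos, of y 0] G_pos[OF s_pos, of y 1]
      unfolding c_def by (intro mult_mono) auto
    then show ?thesis by (simp add: abs_mult algebra_simps)
  qed
  show ?thesis
  proof (rule integrable_dominated_by_G[OF s_pos, of _ "\<Sum>i<M. c i"])
    show "(\<lambda>y. pred M s r A y * U M (post M s r A y)) \<in> borel_measurable lborel"
      unfolding pred_def U_def post_def lik_def by measurable
    fix y
    show "\<bar>pred M s r A y * U M (post M s r A y)\<bar> \<le> (\<Sum>i<M. c i) * ((G y 0 s + G y 1 s) * (1 + y\<^sup>2))"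
      unfolding pred_mult_U_post sum_distrib_right
      by (rule order_trans[OF sum_abs sum_mono]) (simp add: summand_le)
  qed
qed

lemma sum_probe_sets_lik_mult_pred_minus_le:
  assumes "i < M" "K \<le> M"
  shows "(\<Sum>A\<in>probe_sets M K. lik s A y i * (pred M s r A y - r i * lik s A y i))
    \<le> (1 - r i) * (real (card (probe_sets M K)) * (mix_density (real K / real M) s y)\<^sup>2)"
proof -
  let ?P = "probe_sets M K"
  have "(\<Sum>A\<in>?P. lik s A y i * (pred M s r A y - r i * lik s A y i)) =
      (\<Sum>j\<in>{..<M} - {i}. r j * (\<Sum>A\<in>?P. lik s A y i * lik s A y j))"
    unfolding pred_minus_eq[OF assms(1)] sum_distrib_left
    by (subst sum.swap) (simp add: mult.left_commute)
  also have "\<dots> \<le> (\<Sum>j\<in>{..<M} - {i}. r j * (real (card ?P) * (mix_density (real K / real M) s y)\<^sup>2))"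
    using assms r_pos by (intro sum_mono mult_left_mono sum_probe_sets_lik_mult_lik) (auto intro: less_imp_le)
  also have "\<dots> = (1 - r i) * (real (card ?P) * (mix_density (real K / real M) s y)\<^sup>2)"
    by (simp add: sum_distrib_right[symmetric] sum_r_others[OF assms(1)])
  finally show ?thesis .
qed

lemma log_odds_summand_ge:
  assumes i: "i < M" and p: "0 < p"
  shows "r i * log 2 (r i / (1 - r i)) * lik s A y i + r i * (lik s A y i * log 2 (lik s A y i / p))
      + r i / ln 2 * lik s A y i
      - r i / ((1 - r i) * p * ln 2) * (lik s A y i * (pred M s r A y - r i * lik s A y i))
    \<le> r i * lik s A y i * log 2 (r i * lik s A y i / (pred M s r A y - r i * lik s A y i))"
proof -
  let ?g = "lik s A y i"
  let ?v = "pred M s r A y - r i * lik s A y i"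
  have ri: "0 < r i" "r i < 1" using r_pos r_less_1 i by auto
  have "log 2 (r i / (1 - r i)) + log 2 (?g / p) + (1 - ?v / ((1 - r i) * p)) / ln 2 \<le> log 2 (r i * ?g / ?v)"
    using ri p lik_pos[OF s_pos] pred_minus_pos[OF i] by (intro log_mult_divide_ge) auto
  then have "r i * ?g * (log 2 (r i / (1 - r i)) + log 2 (?g / p) + (1 - ?v / ((1 - r i) * p)) / ln 2)
      \<le> r i * ?g * log 2 (r i * ?g / ?v)"
    using ri lik_pos[OF s_pos, of A y i] by (intro mult_left_mono) auto
  moreover have "r i * ?g * (log 2 (r i / (1 - r i)) + log 2 (?g / p) + (1 - ?v / ((1 - r i) * p)) / ln 2)
      = r i * log 2 (r i / (1 - r i)) * ?g + r i * (?g * log 2 (?g / p)) + r i / ln 2 * ?g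
        - r i / ((1 - r i) * p * ln 2) * (?g * ?v)"
    using ri p by (simp add: field_simps)
  ultimately show ?thesis by simp
qed

lemma sum_probe_sets_summand_ge:
  assumes i: "i < M" and K: "K \<le> M"
  shows "real (card (probe_sets M K)) * r i * (mix_density (real K / real M) s y * log 2 (r i / (1 - r i))
      + info_density (real K / real M) s y)
    \<le> (\<Sum>A\<in>probe_sets M K. r i * lik s A y i * log 2 (r i * lik s A y i / (pred M s r A y - r i * lik s A y i)))"
proof -
  let ?P = "probe_sets M K"
  let ?g = "\<lambda>A. lik s A y i"
  let ?v = "\<lambda>A. pred M s r A y - r i * lik s A y i"
  define q where "q = real K / real M"
  define N where "N = real (card ?P)"
  define p where "p = mix_density q s y"
  define L where "L = log 2 (r i / (1 - r i))"
  define a where "a = r i / ((1 - r i) * p * ln 2)"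
  have ri: "0 < r i" "r i < 1" using r_pos r_less_1 i by auto
  have q: "0 \<le> q" "q \<le> 1" using K M_pos by (auto simp: q_def)
  have p: "0 < p" unfolding p_def using mix_density_pos[OF s_pos q] .
  have a: "0 \<le> a" using ri p by (simp add: a_def)
  have sum_g: "(\<Sum>A\<in>?P. ?g A) = N * p"
    using sum_probe_sets_lik[OF i, of "\<lambda>x. x"] by (simp add: N_def p_def q_def mix_density_def)
  have sum_info: "(\<Sum>A\<in>?P. ?g A * log 2 (?g A / p)) = N * info_density q s y"
    using sum_probe_sets_lik[OF i, of "\<lambda>x. x * log 2 (x / p)"]
    by (simp add: N_def p_def q_def info_density_def mult.assoc)
  have sum_cross: "(\<Sum>A\<in>?P. ?g A * ?v A) \<le> (1 - r i) * (N * p\<^sup>2)"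
    using sum_probe_sets_lik_mult_pred_minus_le[OF i K] by (simp add: N_def p_def q_def)
  have "N * r i * (p * L + info_density q s y)
      = r i * L * (N * p) + r i * (N * info_density q s y) + r i / ln 2 * (N * p) - a * ((1 - r i) * (N * p\<^sup>2))"
    using ri p by (simp add: a_def power2_eq_square field_simps)
  also have "\<dots> \<le> r i * L * (\<Sum>A\<in>?P. ?g A) + r i * (\<Sum>A\<in>?P. ?g A * log 2 (?g A / p))
      + r i / ln 2 * (\<Sum>A\<in>?P. ?g A) - a * (\<Sum>A\<in>?P. ?g A * ?v A)"
    unfolding sum_g sum_info using sum_cross a by (simp add: mult_left_mono)
  also have "\<dots> = (\<Sum>A\<in>?P. r i * L * ?g A + r i * (?g A * log 2 (?g A / p)) + r i / ln 2 * ?g A - a * (?g A * ?v A))"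
    by (simp add: sum.distrib sum_subtractf sum_distrib_left)
  also have "\<dots> \<le> (\<Sum>A\<in>?P. r i * ?g A * log 2 (r i * ?g A / ?v A))"
    unfolding L_def a_def using i p by (intro sum_mono log_odds_summand_ge)
  finally show ?thesis unfolding N_def q_def p_def L_def by (simp add: algebra_simps)
qed

lemma sum_probe_sets_pred_mult_U_post_ge:
  assumes "K \<le> M"
  shows "real (card (probe_sets M K)) * (U M r * mix_density (real K / real M) s y + info_density (real K / real M) s y)
    \<le> (\<Sum>A\<in>probe_sets M K. pred M s r A y * U M (post M s r A y))"
proof -
  let ?P = "probe_sets M K"
  let ?p = "mix_density (real K / real M) s y"
  let ?I = "info_density (real K / real M) s y"
  have "real (card ?P) * (U M r * ?p + ?I) =
      real (card ?P) * ?p * (\<Sum>i<M. r i * log 2 (r i / (1 - r i))) + real (card ?P) * ?I * (\<Sum>i<M. r i)"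
    by (simp add: U_def sum_r algebra_simps)
  also have "\<dots> = (\<Sum>i<M. real (card ?P) * r i * (?p * log 2 (r i / (1 - r i)) + ?I))"
    by (simp add: sum.distrib sum_distrib_left sum_distrib_right algebra_simps)
  also have "\<dots> \<le> (\<Sum>i<M. \<Sum>A\<in>?P. r i * lik s A y i * log 2 (r i * lik s A y i / (pred M s r A y - r i * lik s A y i)))"
    using assms by (intro sum_mono sum_probe_sets_summand_ge) auto
  also have "\<dots> = (\<Sum>A\<in>?P. pred M s r A y * U M (post M s r A y))"
    unfolding pred_mult_U_post by (rule sum.swap)
  finally show ?thesis .
qed

lemma expected_next_U_ge:
  assumes "K \<le> M"
  shows "C_BAWGN (real K / real M) s \<le> expected_next_U M K s r - U M r"
proof -
  let ?P = "probe_sets M K"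
  define q where "q = real K / real M"
  define N where "N = real (card ?P)"
  define h where "h y = U M r * mix_density q s y + info_density q s y" for y
  have q: "0 \<le> q" "q \<le> 1" using assms M_pos by (auto simp: q_def)
  have N: "0 < N" using assms by (simp add: N_def card_probe_sets)
  have h: "integrable lborel h" "(\<integral>y. h y \<partial>lborel) = U M r + C_BAWGN q s"
    unfolding h_def using s_pos q
    by (simp_all add: integrable_mix_density integrable_info_density integral_mix_density integral_info_density)
  have "N * (U M r + C_BAWGN q s) = (\<integral>y. N * h y \<partial>lborel)"
    using h by simp
  also have "\<dots> \<le> (\<integral>y. (\<Sum>A\<in>?P. pred M s r A y * U M (post M s r A y)) \<partial>lborel)"
  proof (rule integral_mono)
    show "integrable lborel (\<lambda>y. N * h y)" using h(1) by simp
    show "integrable lborel (\<lambda>y. \<Sum>A\<in>?P. pred M s r A y * U M (post M s r A y))"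
      using integrable_pred_mult_U_post by simp
    show "N * h y \<le> (\<Sum>A\<in>?P. pred M s r A y * U M (post M s r A y))" for y
      unfolding N_def h_def q_def by (rule sum_probe_sets_pred_mult_U_post_ge[OF assms])
  qed
  also have "\<dots> = N * expected_next_U M K s r"
    using N integrable_pred_mult_U_post by (simp add: expected_next_U_def N_def)
  finally show ?thesis using N unfolding q_def by (simp add: mult_le_cancel_left_pos)
qed

end

theorem lemma3:
  fixes B sigma2 :: real and M K n :: nat
    and As :: "nat \<Rightarrow> nat set" and ys :: "nat \<Rightarrow> real"
  assumes "B > 0" and "sigma2 > 0"
    and "M \<ge> 2" and "1 \<le> K" and "K < M"
    and "n \<ge> 1"
    and "\<And>k. k < n \<Longrightarrow> As k \<in> probe_sets M K"
  shows "expected_next_U M K (real K / real M * B * sigma2) (rho_seq M (real K / real M * B * sigma2) As ys n)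
           - U M (rho_seq M (real K / real M * B * sigma2) As ys n)
         \<ge> C_BAWGN (real K / real M) (real K / real M * B * sigma2)"
proof -
  (* The bound holds for every posterior with positive weights. *)
  define s where "s = real K / real M * B * sigma2"
  have s: "0 < s" using assms by (simp add: s_def)
  interpret posterior M s "rho_seq M s As ys n"
    using assms s by unfold_locales (simp_all add: rho_seq_pos sum_rho_seq)
  show ?thesis
    using expected_next_U_ge assms(5) unfolding s_def by simp
qed

end
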